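(* Let $M$ be a finite $\mathscr R$-trivial monoid and $m\in M$. Then the idempotents of $\widetilde L_m$ are exactly the elements of the minimal ideal of $\mathrm{St}_R(m)$, and this set is moreover an $\mathscr L$-class of $M$.
   Context: $M$ is $\mathscr R$-trivial if $mM=nM$ implies $m=n$. $\mathrm{St}_R(m)=\{n\in M: mn=m\}$ (a submonoid). Define $m\le_{\widetilde{\mathscr L}}n$ if for every idempotent $e$, $ne=n$ implies $me=m$; $m\mathrel{\widetilde{\mathscr L}}n$ if $m\le_{\widetilde{\mathscr L}}n$ and $n\le_{\widetilde{\mathscr L}}m$; $\widetilde L_m$ is the $\widetilde{\mathscr L}$-class of $m$. An $\mathscr L$-class of $M$ is a set $\{n: Mn=Mx\}$ for some $x\in M$. *)

theory Defs
  imports Main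
begin

text \<open>Monoid elements are elements of a type of class monoid_mult; the whole type is M.\<close>

definition R_trivial :: "'a::monoid_mult itself \<Rightarrow> bool" where
  "R_trivial _ \<longleftrightarrow> (\<forall>m n::'a. range (\<lambda>x. m * x) = range (\<lambda>x. n * x) \<longrightarrow> m = n)"

definition StR :: "'a::monoid_mult \<Rightarrow> 'a set" where
  "StR m = {n. m * n = m}"

definition Ltilde_le :: "'a::monoid_mult \<Rightarrow> 'a \<Rightarrow> bool" where
  "Ltilde_le m n \<longleftrightarrow> (\<forall>e. e * e = e \<longrightarrow> n * e = n \<longrightarrow> m * e = m)"

definition Ltilde_class :: "'a::monoid_mult \<Rightarrow> 'a set" where
  "Ltilde_class m = {n. Ltilde_le m n \<and> Ltilde_le n m}"

definition is_ideal_of :: "'a::monoid_mult set \<Rightarrow> 'a set \<Rightarrow> bool" where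
  "is_ideal_of S I \<longleftrightarrow> I \<noteq> {} \<and> I \<subseteq> S \<and> (\<forall>s\<in>S. \<forall>x\<in>I. s * x \<in> I \<and> x * s \<in> I)"

definition minimal_ideal :: "'a::monoid_mult set \<Rightarrow> 'a set" where
  "minimal_ideal S = (THE I. is_ideal_of S I \<and> (\<forall>J. is_ideal_of S J \<longrightarrow> I \<subseteq> J))"

definition is_L_class :: "'a::monoid_mult set \<Rightarrow> bool" where
  "is_L_class A \<longleftrightarrow> (\<exists>x. A = {n. range (\<lambda>y. y * n) = range (\<lambda>y. y * x)})"

end

theory Submission
  imports Defs
begin

text \<open>Call \<open>x \<in> S\<close> a right zero of \<open>S\<close> if \<open>xs = x\<close> for all \<open>s \<in> S\<close>. In a finite
\<open>\<R>\<close>-trivial monoid, an element of \<open>St\<^sub>R(m)\<close> whose right ideal \<open>xM\<close> is as small as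
possible is a right zero, and the right zeros of any semigroup form its minimal ideal. An
idempotent \<open>e\<close> that is \<open>\<L>\<close>-tilde related to \<open>m\<close> is fixed by the idempotent power \<open>s\<^sup>k\<close> of
every \<open>s \<in> St\<^sub>R(m)\<close>, and \<open>s\<^sup>k s = s\<^sup>k\<close> then gives \<open>es = e\<close>; conversely right zeros
are idempotents fixed by exactly the idempotents fixing \<open>m\<close>. Two right zeros \<open>x, y\<close> satisfy
\<open>xy = x\<close> and \<open>yx = y\<close>, so they are \<open>\<L>\<close>-related; if \<open>Mn = Mx\<close>, say \<open>x = bn\<close>, then
\<open>m = mbn\<close> and \<open>\<R>\<close>-triviality gives \<open>mb = m\<close>, whence \<open>n \<in> St\<^sub>R(m)\<close>.\<close>

definition right_zeros :: "'a::monoid_mult set \<Rightarrow> 'a set" where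
  "right_zeros S = {x \<in> S. \<forall>s\<in>S. x * s = x}"

lemma R_trivial_absorb:
  fixes x y z :: "'a::monoid_mult"
  assumes rt: "R_trivial TYPE('a)" and xyz: "x * y * z = x"
  shows "x * y = x"
proof -
  have "range ((*) (x * y)) = range ((*) x)"
  proof
    show "range ((*) (x * y)) \<subseteq> range ((*) x)"
      by (auto simp: mult.assoc)
    show "range ((*) x) \<subseteq> range ((*) (x * y))"
    proof
      fix w assume "w \<in> range ((*) x)"
      then obtain v where "w = x * v" by blast
      then have "w = x * y * (z * v)" by (metis xyz mult.assoc)
      then show "w \<in> range ((*) (x * y))" by blast
    qed
  qed
  with rt show ?thesis unfolding R_trivial_def by blast
qed

lemma R_trivial_card_right_ideal:
  fixes x y :: "'a::{monoid_mult, finite}"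
  assumes rt: "R_trivial TYPE('a)"
    and le: "card (range ((*) x)) \<le> card (range ((*) (x * y)))"
  shows "x * y = x"
proof -
  have sub: "range ((*) (x * y)) \<subseteq> range ((*) x)"
    by (auto simp: mult.assoc)
  moreover have "card (range ((*) (x * y))) \<le> card (range ((*) x))"
    using sub by (intro card_mono) simp_all
  ultimately have "range ((*) (x * y)) = range ((*) x)"
    using le by (intro card_subset_eq) simp_all
  with rt show ?thesis unfolding R_trivial_def by blast
qed

lemma right_zeros_nonempty:
  fixes S :: "'a::{monoid_mult, finite} set"
  assumes rt: "R_trivial TYPE('a)" and "a \<in> S"
    and closed: "\<And>x y. x \<in> S \<Longrightarrow> y \<in> S \<Longrightarrow> x * y \<in> S"
  shows "right_zeros S \<noteq> {}"
proof -
  obtain x where "x \<in> S" and least: "\<And>y. y \<in> S \<Longrightarrow> card (range ((*) x)) \<le> card (range ((*) y))"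
    using ex_has_least_nat[of "\<lambda>y. y \<in> S" a "\<lambda>y. card (range ((*) y))"] \<open>a \<in> S\<close> by blast
  then have "x \<in> right_zeros S"
    unfolding right_zeros_def by (auto intro: R_trivial_card_right_ideal[OF rt] least closed)
  then show ?thesis by blast
qed

lemma minimal_ideal_eq_right_zeros:
  fixes S :: "'a::monoid_mult set"
  assumes closed: "\<And>x y. x \<in> S \<Longrightarrow> y \<in> S \<Longrightarrow> x * y \<in> S"
    and nonempty: "right_zeros S \<noteq> {}"
  shows "minimal_ideal S = right_zeros S"
  unfolding minimal_ideal_def
proof (rule the_equality)
  have ideal: "is_ideal_of S (right_zeros S)"
    using nonempty unfolding is_ideal_of_def right_zeros_def
    by (auto intro: closed simp: mult.assoc)
  have "right_zeros S \<subseteq> J" if "is_ideal_of S J" for J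
  proof
    fix x assume x: "x \<in> right_zeros S"
    from that obtain j where "j \<in> J" "J \<subseteq> S" and "\<forall>s\<in>S. s * j \<in> J"
      unfolding is_ideal_of_def by blast
    with x show "x \<in> J" unfolding right_zeros_def by force
  qed
  with ideal show "is_ideal_of S (right_zeros S) \<and> (\<forall>J. is_ideal_of S J \<longrightarrow> right_zeros S \<subseteq> J)"
    by blast
  then show "I = right_zeros S" if "is_ideal_of S I \<and> (\<forall>J. is_ideal_of S J \<longrightarrow> I \<subseteq> J)" for I
    using that by blast
qed

lemma idempotent_power:
  fixes s :: "'a::{monoid_mult, finite}"
  assumes rt: "R_trivial TYPE('a)"
  obtains k where "s ^ k * s = s ^ k" and "s ^ k * s ^ k = s ^ k"
proof -
  have "right_zeros (range ((^) s)) \<noteq> {}"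
    by (rule right_zeros_nonempty[OF rt, of 1]) (auto simp: power_add[symmetric] intro: range_eqI[of _ _ 0])
  then obtain k where "\<forall>j. s ^ k * s ^ j = s ^ k"
    unfolding right_zeros_def by auto
  then show ?thesis using that[of k] by (metis power_one_right)
qed

lemma StR_mult_closed: "x \<in> StR m \<Longrightarrow> y \<in> StR m \<Longrightarrow> x * y \<in> StR m"
  unfolding StR_def by (simp add: mult.assoc[symmetric])

lemma StR_power: "s \<in> StR m \<Longrightarrow> s ^ k \<in> StR m"
  by (induction k) (auto simp: StR_def intro: StR_mult_closed[unfolded StR_def, simplified])

lemma idempotents_Ltilde_class_eq_right_zeros_StR:
  fixes m :: "'a::{monoid_mult, finite}"
  assumes rt: "R_trivial TYPE('a)"
  shows "{e \<in> Ltilde_class m. e * e = e} = right_zeros (StR m)"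
proof (intro equalityI subsetI)
  fix e assume "e \<in> {e \<in> Ltilde_class m. e * e = e}"
  then have ee: "e * e = e" and le: "Ltilde_le e m" and ge: "Ltilde_le m e"
    unfolding Ltilde_class_def by auto
  have "e \<in> StR m" using ge ee unfolding Ltilde_le_def StR_def by blast
  moreover have "e * s = e" if s: "s \<in> StR m" for s
  proof -
    obtain k where absorb: "s ^ k * s = s ^ k" and idem: "s ^ k * s ^ k = s ^ k"
      using idempotent_power[OF rt] by blast
    have "m * s ^ k = m" using StR_power[OF s] unfolding StR_def by simp
    then have ek: "e * s ^ k = e" using le idem unfolding Ltilde_le_def by blast
    then have "e * s = e * (s ^ k * s)" by (metis mult.assoc)
    with absorb ek show ?thesis by simp
  qed
  ultimately show "e \<in> right_zeros (StR m)" unfolding right_zeros_def by blast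
next
  fix x assume "x \<in> right_zeros (StR m)"
  then have mx: "m * x = m" and xs: "\<And>s. m * s = m \<Longrightarrow> x * s = x"
    unfolding right_zeros_def StR_def by auto
  have "Ltilde_le m x" unfolding Ltilde_le_def
    by (metis mx mult.assoc)
  moreover have "Ltilde_le x m" unfolding Ltilde_le_def using xs by blast
  ultimately show "x \<in> {e \<in> Ltilde_class m. e * e = e}"
    using xs[OF mx] unfolding Ltilde_class_def by blast
qed

lemma right_zeros_StR_eq_L_class:
  fixes m :: "'a::monoid_mult"
  assumes rt: "R_trivial TYPE('a)" and x0: "x0 \<in> right_zeros (StR m)"
  shows "right_zeros (StR m) = {n. range (\<lambda>y. y * n) = range (\<lambda>y. y * x0)}"
proof (intro equalityI subsetI)
  fix n assume n: "n \<in> right_zeros (StR m)"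
  then have "n * x0 = n" and "x0 * n = x0"
    using x0 unfolding right_zeros_def by auto
  then show "n \<in> {n. range (\<lambda>y. y * n) = range (\<lambda>y. y * x0)}"
    by (auto simp: image_iff) (metis mult.assoc)+
next
  fix n assume "n \<in> {n. range (\<lambda>y. y * n) = range (\<lambda>y. y * x0)}"
  then have eq: "range (\<lambda>y. y * n) = range (\<lambda>y. y * x0)" by simp
  obtain a where a: "n = a * x0" using eq by (metis (mono_tags) mult_1_left rangeE rangeI)
  obtain b where b: "x0 = b * n" using eq by (metis (mono_tags) mult_1_left rangeE rangeI)
  have mx0: "m * x0 = m" and x0s: "\<And>s. m * s = m \<Longrightarrow> x0 * s = x0"
    using x0 unfolding right_zeros_def StR_def by auto
  have "m * b = m" using R_trivial_absorb[OF rt, of m b n] mx0 b by (simp add: mult.assoc)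
  then have "m * n = m" using mx0 b by (metis mult.assoc)
  moreover have "n * s = n" if "m * s = m" for s
    using x0s[OF that] a by (simp add: mult.assoc)
  ultimately show "n \<in> right_zeros (StR m)" unfolding right_zeros_def StR_def by simp
qed

theorem mainTheorem20:
  fixes m :: "'a::{monoid_mult, finite}"
  assumes "R_trivial TYPE('a)"
  shows "{e \<in> Ltilde_class m. e * e = e} = minimal_ideal (StR m)
         \<and> is_L_class {e \<in> Ltilde_class m. e * e = e}"
proof -
  have "1 \<in> StR m" by (simp add: StR_def)
  then have nonempty: "right_zeros (StR m) \<noteq> {}"
    using right_zeros_nonempty[OF assms] StR_mult_closed by blast
  then obtain x0 where "x0 \<in> right_zeros (StR m)" by blast
  then have "is_L_class (right_zeros (StR m))"
    unfolding is_L_class_def using right_zeros_StR_eq_L_class[OF assms] by blast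
  moreover have "minimal_ideal (StR m) = right_zeros (StR m)"
    using minimal_ideal_eq_right_zeros[OF StR_mult_closed nonempty] .
  ultimately show ?thesis
    by (simp add: idempotents_Ltilde_class_eq_right_zeros_StR[OF assms])
qed

end
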